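(* For every $n\ge2$, $$E\big[U^{(n)}\tau^{(n)}\big]=\frac{n+1}{n-1}\big(H_{n,1}^2-H_{n,2}\big)-\frac{2n}{n-1}\big(H_{n,1}-1\big).$$
   Context: Fix $n\ge 2$. A Yule tree with speciation rate 1 on $n$ tips: start with a single lineage; each lineage independently splits into two at rate 1; the process is stopped just before the $n$-th speciation event, so the tree has $n$ tips and $n-1$ speciation (internal) nodes, numbered $1,\dots,n-1$ chronologically from the root. For $i=1,\dots,n$ let $T_i$ be the length of the time interval during which there are exactly $i$ lineages; the $T_i$ are independent, $T_i\sim\mathrm{Exp}(i)$ (rate $i$), the $k$-th speciation occurs at time $T_1+\dots+T_k$, and at each speciation the splitting lineage is uniformly chosen among current lineages, independently of the $T_i$. The tree height is $U^{(n)}=T_1+\dots+T_n$. Choose an unordered pair of distinct tips uniformly at random and let $\kappa_n\in\{1,\dots,n-1\}$ be the index of the speciation event at which their lineages split; the coalescent time of the pair is $\tau^{(n)}=T_{\kappa_n+1}+\dots+T_n$. $H_{n,r}=\sum_{i=1}^n i^{-r}$. *)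

theory Defs
  imports "HOL-Probability.Probability"
begin

definition H :: "nat \<Rightarrow> nat \<Rightarrow> real" where
  "H n r = (\<Sum>i=1..n. 1 / (real i) ^ r)"

text \<open>Tree topology of the Yule process after k speciation events.
  The tree is encoded as the list of its current lineages; each lineage is
  represented by the set of (chronological indices of) speciation events on
  its path from the root.\<close>
fun yule_shape :: "nat \<Rightarrow> nat set list pmf" where
  "yule_shape 0 = return_pmf [{}]"
| "yule_shape (Suc k) =
     do { L \<leftarrow> yule_shape k;
          j \<leftarrow> pmf_of_set {..<length L};
          let c = insert (Suc k) (L ! j);
          return_pmf (L[j := c] @ [c]) }"

text \<open>kappa_n: choose an unordered pair of distinct tips of the n-tip tree
  uniformly; the index of the speciation event at which their lineages split
  is the latest speciation event common to both ancestries.\<close>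
definition kappa_pmf :: "nat \<Rightarrow> nat pmf" where
  "kappa_pmf n =
     do { L \<leftarrow> yule_shape (n - 1);
          p \<leftarrow> pmf_of_set {(a, b). a < b \<and> b < length L};
          return_pmf (Max (L ! fst p \<inter> L ! snd p)) }"

definition T_measure :: "nat \<Rightarrow> (nat \<Rightarrow> real) measure" where
  "T_measure n = (\<Pi>\<^sub>M i\<in>{1..n}. density lborel (exponential_density (real i)))"

definition yule_space :: "nat \<Rightarrow> ((nat \<Rightarrow> real) \<times> nat) measure" where
  "yule_space n = T_measure n \<Otimes>\<^sub>M measure_pmf (kappa_pmf n)"

definition height :: "nat \<Rightarrow> (nat \<Rightarrow> real) \<Rightarrow> real" where
  "height n T = (\<Sum>i=1..n. T i)"

definition coal_time :: "nat \<Rightarrow> (nat \<Rightarrow> real) \<Rightarrow> nat \<Rightarrow> real" where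
  "coal_time n T k = (\<Sum>i\<in>{k<..n}. T i)"

end

theory Submission
  imports Defs
begin

(*
  Since U = \<Sum>\<^sub>i T\<^sub>i and \<tau> = \<Sum>\<^sub>j T\<^sub>j [\<kappa> < j] with T independent of \<kappa>, the expectation
  is \<Sum>\<^sub>i\<^sub>j E[T\<^sub>i T\<^sub>j] P(\<kappa> < j), where E[T\<^sub>i T\<^sub>j] = (1 + [i = j]) / (i j).
  For the law of \<kappa>, let S\<^sub>k be the sum of h over the split events of all pairs of lineages
  after k speciations. When lineage j splits at event k+1, old pairs keep their split event, the
  two daughters split at k+1, and the new lineage repeats every pair of its sister; averaging
  over j gives E S\<^sub>k\<^sub>+\<^sub>1 = h(k+1) + (k+3)/(k+1) E S\<^sub>k. Hence
  P(\<kappa> = e) = 2(n+1) / ((n-1)(e+1)(e+2)), by telescoping P(\<kappa> < j) = (n+1)(j-1) / ((n-1)(j+1)),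
  and the remaining double sum is evaluated by partial fractions.
*)

lemma sum_pairs_less:
  fixes f :: "nat \<times> nat \<Rightarrow> 'a::comm_monoid_add"
  shows "(\<Sum>p\<in>{(a, b). a < b \<and> b < m}. f p) = (\<Sum>b<m. \<Sum>a<b. f (a, b))"
proof (induction m)
  case (Suc m)
  have pairs_Suc: "{(a, b). a < b \<and> b < Suc m} = {(a, b). a < b \<and> b < m} \<union> (\<lambda>a. (a, m)) ` {..<m}"
    by auto
  have "finite {(a, b). a < b \<and> b < m}"
    by (rule finite_subset[of _ "{..<m} \<times> {..<m}"]) auto
  then have "(\<Sum>p\<in>{(a, b). a < b \<and> b < Suc m}. f p)
      = (\<Sum>p\<in>{(a, b). a < b \<and> b < m}. f p) + (\<Sum>a<m. f (a, m))"
    unfolding pairs_Suc by (subst sum.union_disjoint) (auto simp: sum.reindex inj_on_def)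
  then show ?case using Suc by simp
qed simp

lemma card_pairs_less: "real (card {(a, b). a < b \<and> b < m}) = real m * (real m - 1) / 2"
proof -
  have "real (card {(a, b). a < b \<and> b < m}) = (\<Sum>b<m. real b)"
    using sum_pairs_less[of "\<lambda>_. 1 :: real" m] by simp
  also have "\<dots> = real m * (real m - 1) / 2"
    by (induction m) (auto simp: field_simps)
  finally show ?thesis .
qed

lemma sum_off_diagonal_symmetric:
  fixes G :: "nat \<Rightarrow> nat \<Rightarrow> 'a::comm_semiring_1"
  assumes "\<And>a b. G a b = G b a"
  shows "(\<Sum>j<m. \<Sum>a\<in>{..<m} - {j}. G a j) = 2 * (\<Sum>b<m. \<Sum>a<b. G a b)"
proof (induction m)
  case (Suc m)
  have "(\<Sum>j<Suc m. \<Sum>a\<in>{..<Suc m} - {j}. G a j)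
      = (\<Sum>j<m. (\<Sum>a\<in>{..<m} - {j}. G a j) + G m j) + (\<Sum>a<m. G a m)"
  proof -
    have "{..<Suc m} - {j} = insert m ({..<m} - {j})" if "j < m" for j
      using that by auto
    then show ?thesis by (simp add: lessThan_Suc_eq_insert_0[symmetric] lessThan_Suc add.commute)
  qed
  then show ?case using Suc by (simp add: sum.distrib assms mult_2 add_ac)
qed simp

lemma expectation_bind_pmf_finite:
  fixes h :: "'b \<Rightarrow> real"
  assumes "finite (set_pmf p)" "\<And>x. x \<in> set_pmf p \<Longrightarrow> finite (set_pmf (f x))"
  shows "measure_pmf.expectation (bind_pmf p f) h =
         measure_pmf.expectation p (\<lambda>x. measure_pmf.expectation (f x) h)"
proof -
  have "measure_pmf.expectation (bind_pmf p f) h =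
        (\<Sum>x\<in>set_pmf p. pmf p x *\<^sub>R measure_pmf.expectation (f x) h)"
    by (rule pmf_expectation_bind[OF assms subset_refl])
  also have "\<dots> = measure_pmf.expectation p (\<lambda>x. measure_pmf.expectation (f x) h)"
    by (rule integral_measure_pmf[OF assms(1), symmetric]) auto
  finally show ?thesis .
qed

definition speciate :: "nat \<Rightarrow> nat set list \<Rightarrow> nat \<Rightarrow> nat set list" where
  "speciate k L j = L[j := insert k (L ! j)] @ [insert k (L ! j)]"

lemma yule_shape_Suc_speciate:
  "yule_shape (Suc k) = yule_shape k \<bind> (\<lambda>L. map_pmf (speciate (Suc k) L) (pmf_of_set {..<length L}))"
  by (simp add: speciate_def map_pmf_def Let_def)

lemma yule_shape_lineages:
  "L \<in> set_pmf (yule_shape k) \<Longrightarrow> length L = Suc k \<and> (\<forall>x\<in>set L. x \<subseteq> {1..k})"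
proof (induction k arbitrary: L)
  case 0
  then show ?case by simp
next
  case (Suc k)
  then obtain L0 j where L0: "L0 \<in> set_pmf (yule_shape k)"
    and j: "j \<in> set_pmf (pmf_of_set {..<length L0})" and L: "L = speciate (Suc k) L0 j"
    unfolding yule_shape_Suc_speciate by auto
  have len: "length L0 = Suc k" and sub: "\<forall>x\<in>set L0. x \<subseteq> {1..k}"
    using Suc.IH[OF L0] by auto
  then have "j < Suc k" using j by (subst (asm) set_pmf_of_set) auto
  then have "L0 ! j \<subseteq> {1..k}"
    using sub len by simp
  then have "insert (Suc k) (L0 ! j) \<subseteq> {1..Suc k}"
    by auto
  moreover have "set L \<subseteq> insert (insert (Suc k) (L0 ! j)) (set L0)"
    unfolding L speciate_def using set_update_subset_insert by fastforce
  ultimately have "\<forall>x\<in>set L. x \<subseteq> {1..Suc k}"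
    using sub by fastforce
  then show ?case by (simp add: L speciate_def len)
qed

lemma finite_set_pmf_yule_shape: "finite (set_pmf (yule_shape k))"
proof (induction k)
  case (Suc k)
  have "finite (set_pmf (pmf_of_set {..<length L}))" if "L \<in> set_pmf (yule_shape k)" for L
    using yule_shape_lineages[OF that] by (subst set_pmf_of_set) auto
  then show ?case using Suc unfolding yule_shape_Suc_speciate by simp
qed simp

definition split_sum :: "(nat \<Rightarrow> real) \<Rightarrow> nat set list \<Rightarrow> real" where
  "split_sum h L = (\<Sum>b<length L. \<Sum>a<b. h (Max (L ! a \<inter> L ! b)))"

lemma split_sum_speciate:
  assumes len: "length L = Suc k" and sub: "\<forall>x\<in>set L. x \<subseteq> {1..k}" and j: "j < Suc k"
  shows "split_sum h (speciate (Suc k) L j)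
       = split_sum h L + h (Suc k) + (\<Sum>a\<in>{..<Suc k} - {j}. h (Max (L ! a \<inter> L ! j)))"
proof -
  define c where "c = insert (Suc k) (L ! j)"
  define L' where "L' = speciate (Suc k) L j"
  have fin: "L ! a \<subseteq> {1..k}" if "a < Suc k" for a
    using sub len that by simp
  then have new: "Suc k \<notin> L ! a" if "a < Suc k" for a
    using that by fastforce
  have len': "length L' = Suc (Suc k)"
    using len by (simp add: L'_def speciate_def)
  have nth': "L' ! a = (if a = j then c else L ! a)" if "a < Suc k" for a
    using len that by (auto simp: L'_def speciate_def c_def nth_append)
  have last': "L' ! Suc k = c"
    using len by (simp add: L'_def speciate_def c_def nth_append)
  have old_pairs: "L' ! a \<inter> L' ! b = L ! a \<inter> L ! b" if "a < b" "b < Suc k" for a b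
    using new that by (auto simp: nth' c_def)
  have new_pairs: "L' ! a \<inter> L' ! Suc k = L ! a \<inter> L ! j" if "a < Suc k" "a \<noteq> j" for a
    using new that by (auto simp: nth' last' c_def)
  have max_c: "Max c = Suc k"
    unfolding c_def using fin[OF j] by (intro Max_eqI) (auto intro: finite_subset)
  then have split_pair: "Max (L' ! j \<inter> L' ! Suc k) = Suc k"
    using j by (simp add: nth' last')
  have "split_sum h L' = (\<Sum>b<Suc k. \<Sum>a<b. h (Max (L' ! a \<inter> L' ! b)))
                        + (\<Sum>a<Suc k. h (Max (L' ! a \<inter> L' ! Suc k)))"
    unfolding split_sum_def len' by simp
  also have "(\<Sum>b<Suc k. \<Sum>a<b. h (Max (L' ! a \<inter> L' ! b))) = split_sum h L"
    unfolding split_sum_def len by (intro sum.cong refl) (simp add: old_pairs)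
  also have "(\<Sum>a<Suc k. h (Max (L' ! a \<inter> L' ! Suc k)))
           = h (Suc k) + (\<Sum>a\<in>{..<Suc k} - {j}. h (Max (L ! a \<inter> L ! j)))"
    using j by (subst sum.remove[of _ j]) (auto simp: split_pair new_pairs intro!: sum.cong)
  finally show ?thesis
    unfolding L'_def by simp
qed

lemma sum_split_sum_speciate:
  assumes len: "length L = Suc k" and sub: "\<forall>x\<in>set L. x \<subseteq> {1..k}"
  shows "(\<Sum>j<Suc k. split_sum h (speciate (Suc k) L j))
       = real (Suc k) * h (Suc k) + (real k + 3) * split_sum h L"
proof -
  have "(\<Sum>j<Suc k. split_sum h (speciate (Suc k) L j))
      = real (Suc k) * (split_sum h L + h (Suc k))
        + (\<Sum>j<Suc k. \<Sum>a\<in>{..<Suc k} - {j}. h (Max (L ! a \<inter> L ! j)))"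
    by (simp add: split_sum_speciate[OF len sub] sum.distrib)
  also have "(\<Sum>j<Suc k. \<Sum>a\<in>{..<Suc k} - {j}. h (Max (L ! a \<inter> L ! j))) = 2 * split_sum h L"
    unfolding split_sum_def len by (rule sum_off_diagonal_symmetric) (simp add: Int_commute)
  finally show ?thesis
    by (simp add: algebra_simps)
qed

lemma expectation_split_sum_Suc:
  "measure_pmf.expectation (yule_shape (Suc k)) (split_sum h)
   = h (Suc k) + (real k + 3) / (real k + 1) * measure_pmf.expectation (yule_shape k) (split_sum h)"
proof -
  let ?step = "\<lambda>L. map_pmf (speciate (Suc k) L) (pmf_of_set {..<length L})"
  have step: "measure_pmf.expectation (?step L) (split_sum h)
              = h (Suc k) + (real k + 3) / (real k + 1) * split_sum h L"
    if "L \<in> set_pmf (yule_shape k)" for L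
  proof -
    have len: "length L = Suc k" and sub: "\<forall>x\<in>set L. x \<subseteq> {1..k}"
      using yule_shape_lineages[OF that] by auto
    have "measure_pmf.expectation (?step L) (split_sum h)
          = (\<Sum>j<Suc k. split_sum h (speciate (Suc k) L j)) / real (Suc k)"
      using integral_pmf_of_set[of "{..<Suc k}" "\<lambda>j. split_sum h (speciate (Suc k) L j)"]
      by (simp add: len lessThan_empty_iff del: sum.lessThan_Suc)
    then show ?thesis
      unfolding sum_split_sum_speciate[OF len sub] by (simp add: field_simps)
  qed
  have "measure_pmf.expectation (yule_shape (Suc k)) (split_sum h)
        = measure_pmf.expectation (yule_shape k) (\<lambda>L. measure_pmf.expectation (?step L) (split_sum h))"
    unfolding yule_shape_Suc_speciate
    by (rule expectation_bind_pmf_finite[OF finite_set_pmf_yule_shape])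
       (auto dest!: yule_shape_lineages simp: lessThan_empty_iff)
  also have "\<dots> = measure_pmf.expectation (yule_shape k)
                    (\<lambda>L. h (Suc k) + (real k + 3) / (real k + 1) * split_sum h L)"
    by (intro integral_cong_AE) (simp_all add: AE_measure_pmf_iff step del: integral_map_pmf)
  also have "\<dots> = h (Suc k) + (real k + 3) / (real k + 1) * measure_pmf.expectation (yule_shape k) (split_sum h)"
    by (simp add: integrable_measure_pmf_finite[OF finite_set_pmf_yule_shape])
  finally show ?thesis .
qed

lemma expectation_split_sum:
  "measure_pmf.expectation (yule_shape k) (split_sum h)
   = (\<Sum>e=1..k. h e * ((real k + 1) * (real k + 2) / ((real e + 1) * (real e + 2))))"
proof (induction k)
  case 0
  then show ?case by (simp add: split_sum_def)
next
  case (Suc k)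
  have "(real k + 3) / (real k + 1) * ((real k + 1) * (real k + 2))
        = (real (Suc k) + 1) * (real (Suc k) + 2)"
    by (simp add: field_simps)
  then have scale: "(real k + 3) / (real k + 1) * ((real k + 1) * (real k + 2) / x)
        = (real (Suc k) + 1) * (real (Suc k) + 2) / x" for x
    by (metis times_divide_eq_right)
  have "(real k + 3) / (real k + 1)
          * (\<Sum>e=1..k. h e * ((real k + 1) * (real k + 2) / ((real e + 1) * (real e + 2))))
        = (\<Sum>e=1..k. h e * ((real (Suc k) + 1) * (real (Suc k) + 2) / ((real e + 1) * (real e + 2))))"
    unfolding sum_distrib_left by (intro sum.cong refl) (metis scale mult.left_commute)
  then show ?case
    unfolding expectation_split_sum_Suc Suc.IH by simp
qed

lemma kappa_pmf_map_pairs: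
  "kappa_pmf n = yule_shape (n - 1) \<bind>
     (\<lambda>L. map_pmf (\<lambda>(a, b). Max (L ! a \<inter> L ! b)) (pmf_of_set {(a, b). a < b \<and> b < length L}))"
  by (simp add: kappa_pmf_def map_pmf_def case_prod_beta)

lemma expectation_kappa_pmf:
  assumes n: "n \<ge> 2"
  shows "measure_pmf.expectation (kappa_pmf n) g
       = (\<Sum>e=1..n-1. g e * (2 * (real n + 1) / ((real n - 1) * (real e + 1) * (real e + 2))))"
proof -
  let ?pairs = "{(a, b). a < b \<and> b < n}"
  let ?choose2 = "real n * (real n - 1) / 2"
  have "(0, 1) \<in> ?pairs" using n by simp
  then have pairs_ne: "?pairs \<noteq> {}" by blast
  have pairs_fin: "finite ?pairs"
    by (rule finite_subset[of _ "{..<n} \<times> {..<n}"]) auto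
  have len: "length L = n" if "L \<in> set_pmf (yule_shape (n - 1))" for L
    using yule_shape_lineages[OF that] n by simp
  have inner: "measure_pmf.expectation
                 (map_pmf (\<lambda>(a, b). Max (L ! a \<inter> L ! b)) (pmf_of_set {(a, b). a < b \<and> b < length L})) g
               = split_sum g L / ?choose2"
    if "L \<in> set_pmf (yule_shape (n - 1))" for L
    using integral_pmf_of_set[OF pairs_ne pairs_fin, of "\<lambda>p. g (Max (L ! fst p \<inter> L ! snd p))"]
    by (simp add: len[OF that] split_sum_def sum_pairs_less card_pairs_less case_prod_beta)
  have "measure_pmf.expectation (kappa_pmf n) g
        = measure_pmf.expectation (yule_shape (n - 1))
            (\<lambda>L. measure_pmf.expectation (map_pmf (\<lambda>(a, b). Max (L ! a \<inter> L ! b))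
                   (pmf_of_set {(a, b). a < b \<and> b < length L})) g)"
    unfolding kappa_pmf_map_pairs
    by (rule expectation_bind_pmf_finite[OF finite_set_pmf_yule_shape])
       (use pairs_ne pairs_fin in \<open>simp add: len\<close>)
  also have "\<dots> = measure_pmf.expectation (yule_shape (n - 1)) (\<lambda>L. split_sum g L / ?choose2)"
    by (intro integral_cong_AE) (simp_all add: AE_measure_pmf_iff inner del: integral_map_pmf)
  also have "\<dots> = (\<Sum>e=1..n-1. g e * (real n * (real n + 1) / ((real e + 1) * (real e + 2)))) / ?choose2"
    using n by (simp add: expectation_split_sum algebra_simps)
  also have "\<dots> = (\<Sum>e=1..n-1. g e * (2 * (real n + 1) / ((real n - 1) * (real e + 1) * (real e + 2))))"
    unfolding sum_divide_distrib
  proof (intro sum.cong refl)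
    fix e
    have "real n \<noteq> 0" "real n - 1 \<noteq> 0" "real e + 1 \<noteq> 0" "real e + 2 \<noteq> 0"
      using n by linarith+
    then show "g e * (real n * (real n + 1) / ((real e + 1) * (real e + 2))) / ?choose2
             = g e * (2 * (real n + 1) / ((real n - 1) * (real e + 1) * (real e + 2)))"
      by (simp add: divide_simps)
  qed
  finally show ?thesis .
qed

lemma sum_inverse_consecutive_products:
  "(\<Sum>e=1..m. 1 / ((real e + 1) * (real e + 2))) = real m / (2 * (real m + 2))"
proof (induction m)
  case (Suc m)
  have "real m + 2 \<noteq> 0" "real m + 3 \<noteq> 0" by linarith+
  then have "real m / (2 * (real m + 2)) + 1 / ((real m + 2) * (real m + 3))
        = (real m + 1) / (2 * (real m + 3))"
    by (simp add: divide_simps) (simp add: algebra_simps)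
  then show ?case using Suc by (simp add: add_ac)
qed simp

lemma prob_kappa_pmf_lessThan:
  assumes n: "n \<ge> 2" and j: "j \<in> {1..n}"
  shows "measure_pmf.prob (kappa_pmf n) {..<j} = (real n + 1) / (real n - 1) * ((real j - 1) / (real j + 1))"
proof -
  let ?c = "2 * (real n + 1) / (real n - 1)"
  have "measure_pmf.prob (kappa_pmf n) {..<j} = measure_pmf.expectation (kappa_pmf n) (indicator {..<j})"
    by simp
  also have "\<dots> = (\<Sum>e\<in>{1..j-1}. ?c * (1 / ((real e + 1) * (real e + 2))))"
    unfolding expectation_kappa_pmf[OF n]
    by (rule sum.mono_neutral_cong_right) (use j in \<open>auto simp: indicator_def\<close>)
  also have "\<dots> = ?c * (real (j - 1) / (2 * (real (j - 1) + 2)))"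
    unfolding sum_distrib_left[symmetric] sum_inverse_consecutive_products ..
  also have "\<dots> = (real n + 1) / (real n - 1) * ((real j - 1) / (real j + 1))"
  proof -
    have "real (j - 1) = real j - 1" using j by simp
    moreover have "real n - 1 \<noteq> 0" "real j + 1 \<noteq> 0" using n by linarith+
    ultimately show ?thesis by (simp add: divide_simps) (simp add: algebra_simps)
  qed
  finally show ?thesis .
qed

lemma exponential_density_moment:
  assumes "l > 0"
  shows integrable_exponential_density_power:
      "integrable (density lborel (exponential_density l)) (\<lambda>x. x ^ p)"
    and integral_exponential_density_power:
      "(\<integral>x. x ^ p \<partial>density lborel (exponential_density l)) = fact p / l ^ p"
proof -
  have distr: "distributed (density lborel (exponential_density l)) lborel (\<lambda>x. x) (exponential_density l)"
    unfolding distributed_def by (auto simp: distr_id2)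
  interpret prob_space "density lborel (exponential_density l)"
    using assms by (rule prob_space_exponential_density)
  show "integrable (density lborel (exponential_density l)) (\<lambda>x. x ^ p)"
    using erlang_ith_moment_integrable[OF assms distr] by simp
  show "(\<integral>x. x ^ p \<partial>density lborel (exponential_density l)) = fact p / l ^ p"
    using erlang_ith_moment[OF assms distr, of p] by simp
qed

lemma product_sigma_finite_exponential:
  "product_sigma_finite (\<lambda>i. density lborel (exponential_density (real i)))"
  unfolding product_sigma_finite_def
  by (auto simp: sigma_finite_measure.sigma_finite_iff_density_finite[OF sigma_finite_lborel])

lemma prob_space_T_measure: "prob_space (T_measure n)"
  unfolding T_measure_def
  by (rule prob_space_PiM) (auto intro: prob_space_exponential_density)

lemma T_measure_mixed_moment:
  assumes i: "i \<in> {1..n}" and j: "j \<in> {1..n}"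
  shows integrable_T_measure_mult: "integrable (T_measure n) (\<lambda>T. T i * T j)"
    and integral_T_measure_mult:
      "(\<integral>T. T i * T j \<partial>T_measure n) = (if i = j then 2 else 1) / (real i * real j)"
proof -
  interpret product_sigma_finite "\<lambda>i. density lborel (exponential_density (real i))"
    by (rule product_sigma_finite_exponential)
  define c where "c l = (if l = i then 1 else 0) + (if l = j then 1 else (0::nat))" for l
  have monomial: "(\<Prod>l\<in>{1..n}. T l ^ c l) = T i * T j" for T :: "nat \<Rightarrow> real"
  proof -
    have "(\<Prod>l\<in>{1..n}. T l ^ c l) = (\<Prod>l\<in>{1..n}. (if l = i then T l else 1) * (if l = j then T l else 1))"
      by (intro prod.cong refl) (auto simp: c_def)
    also have "\<dots> = T i * T j" using i j by (simp add: prod.distrib)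
    finally show ?thesis .
  qed
  have factors: "integrable (density lborel (exponential_density (real l))) (\<lambda>x. x ^ c l)"
    if "l \<in> {1..n}" for l
    using that by (intro integrable_exponential_density_power) auto
  have "integrable (T_measure n) (\<lambda>T. \<Prod>l\<in>{1..n}. T l ^ c l)"
    unfolding T_measure_def by (rule product_integrable_prod) (auto intro: factors)
  then show "integrable (T_measure n) (\<lambda>T. T i * T j)"
    by (simp only: monomial)
  have "(\<integral>T. T i * T j \<partial>T_measure n) = (\<integral>T. (\<Prod>l\<in>{1..n}. T l ^ c l) \<partial>T_measure n)"
    by (simp only: monomial)
  also have "\<dots> = (\<Prod>l\<in>{1..n}. \<integral>x. x ^ c l \<partial>density lborel (exponential_density (real l)))"
    unfolding T_measure_def by (rule product_integral_prod) (auto intro: factors)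
  also have "\<dots> = (\<Prod>l\<in>{1..n}. fact (c l) / real l ^ c l)"
    by (intro prod.cong refl) (auto simp: integral_exponential_density_power)
  also have "\<dots> = (\<Prod>l\<in>{1..n}. (if l = i then 1 / real l else 1) * (if l = j then 1 / real l else 1)
                                  * (if l = i \<and> i = j then 2 else 1))"
    by (intro prod.cong refl) (auto simp: c_def power2_eq_square)
  also have "\<dots> = (if i = j then 2 else 1) / (real i * real j)"
    using i j by (simp add: prod.distrib)
  finally show "(\<integral>T. T i * T j \<partial>T_measure n) = (if i = j then 2 else 1) / (real i * real j)" .
qed

lemma pair_measure_mult:
  fixes a :: "'a \<Rightarrow> real" and b :: "'b \<Rightarrow> real"
  assumes "sigma_finite_measure M1" "sigma_finite_measure M2"
    and a: "integrable M1 a" and b: "integrable M2 b"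
  shows integrable_pair_measure_mult: "integrable (M1 \<Otimes>\<^sub>M M2) (\<lambda>\<omega>. a (fst \<omega>) * b (snd \<omega>))"
    and integral_pair_measure_mult:
      "(\<integral>\<omega>. a (fst \<omega>) * b (snd \<omega>) \<partial>(M1 \<Otimes>\<^sub>M M2)) = integral\<^sup>L M1 a * integral\<^sup>L M2 b"
proof -
  interpret pair_sigma_finite M1 M2
    using assms(1,2) by (simp add: pair_sigma_finite_def)
  have [measurable]: "a \<in> borel_measurable M1" "b \<in> borel_measurable M2"
    using a b by auto
  show int: "integrable (M1 \<Otimes>\<^sub>M M2) (\<lambda>\<omega>. a (fst \<omega>) * b (snd \<omega>))"
  proof (rule Fubini_integrable)
    have "integrable M1 (\<lambda>x. norm (a x) * (\<integral>y. norm (b y) \<partial>M2))"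
      using a by (intro integrable_mult_left integrable_norm)
    then show "integrable M1 (\<lambda>x. \<integral>y. norm (a (fst (x, y)) * b (snd (x, y))) \<partial>M2)"
      by (simp add: abs_mult)
    show "AE x in M1. integrable M2 (\<lambda>y. a (fst (x, y)) * b (snd (x, y)))"
      using b by (auto intro: integrable_mult_right)
  qed measurable
  have "(\<integral>\<omega>. a (fst \<omega>) * b (snd \<omega>) \<partial>(M1 \<Otimes>\<^sub>M M2)) = (\<integral>x. (\<integral>y. a x * b y \<partial>M2) \<partial>M1)"
    using integral_fst'[OF int] by simp
  then show "(\<integral>\<omega>. a (fst \<omega>) * b (snd \<omega>) \<partial>(M1 \<Otimes>\<^sub>M M2)) = integral\<^sup>L M1 a * integral\<^sup>L M2 b"
    by simp
qed

lemma integral_height_coal_time: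
  fixes K :: "nat pmf"
  shows "(\<integral>\<omega>. height n (fst \<omega>) * coal_time n (fst \<omega>) (snd \<omega>) \<partial>(T_measure n \<Otimes>\<^sub>M measure_pmf K))
       = (\<Sum>i=1..n. \<Sum>j=1..n. (if i = j then 2 else 1) / (real i * real j) * measure_pmf.prob K {..<j})"
proof -
  let ?M = "T_measure n \<Otimes>\<^sub>M measure_pmf K"
  let ?f = "\<lambda>i j \<omega>. fst \<omega> i * fst \<omega> j * indicator {..<j} (snd \<omega>) :: real"
  have coal_time: "coal_time n T k = (\<Sum>j=1..n. T j * indicator {..<j} k)" for T k
    unfolding coal_time_def by (rule sum.mono_neutral_cong_left) (auto simp: indicator_def)
  have expand: "height n (fst \<omega>) * coal_time n (fst \<omega>) (snd \<omega>) = (\<Sum>i=1..n. \<Sum>j=1..n. ?f i j \<omega>)" for \<omega>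
    unfolding height_def coal_time sum_product by (simp add: mult.assoc)
  have sigma_finite: "sigma_finite_measure (T_measure n)" "sigma_finite_measure (measure_pmf K)"
    by (auto intro: prob_space_imp_sigma_finite prob_space_T_measure measure_pmf.prob_space_axioms)
  have indicator: "integrable (measure_pmf K) (indicator {..<j} :: nat \<Rightarrow> real)" for j
    by (rule measure_pmf.integrable_const_bound[where B=1]) auto
  have integrable: "integrable ?M (?f i j)" if "i \<in> {1..n}" "j \<in> {1..n}" for i j
    using integrable_pair_measure_mult[OF sigma_finite integrable_T_measure_mult[OF that] indicator] .
  have integrable_row: "integrable ?M (\<lambda>\<omega>. \<Sum>j=1..n. ?f i j \<omega>)" if "i \<in> {1..n}" for i
    by (rule Bochner_Integration.integrable_sum) (rule integrable[OF that])
  have integral: "integral\<^sup>L ?M (?f i j) = (if i = j then 2 else 1) / (real i * real j) * measure_pmf.prob K {..<j}"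
    if "i \<in> {1..n}" "j \<in> {1..n}" for i j
    using integral_pair_measure_mult[OF sigma_finite integrable_T_measure_mult[OF that] indicator]
    by (simp add: integral_T_measure_mult[OF that])
  have "(\<integral>\<omega>. height n (fst \<omega>) * coal_time n (fst \<omega>) (snd \<omega>) \<partial>?M)
        = (\<Sum>i=1..n. \<integral>\<omega>. (\<Sum>j=1..n. ?f i j \<omega>) \<partial>?M)"
    unfolding expand by (rule Bochner_Integration.integral_sum) (erule integrable_row)
  also have "\<dots> = (\<Sum>i=1..n. \<Sum>j=1..n. integral\<^sup>L ?M (?f i j))"
    by (intro sum.cong refl Bochner_Integration.integral_sum) (auto intro!: integrable)
  finally show ?thesis
    by (simp add: integral)
qed

lemma H_Suc: "H (Suc n) r = H n r + 1 / real (Suc n) ^ r"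
  unfolding H_def by simp

lemma sum_partial_fractions_H1:
  "(\<Sum>j=1..n. (real j - 1) / (real j * (real j + 1))) = H n 1 - 2 + 2 / (real n + 1)"
proof (induction n)
  case (Suc n)
  have "real n + 1 \<noteq> 0" "real n + 2 \<noteq> 0" by linarith+
  then have "H n 1 - 2 + 2 / (real n + 1) + real n / ((real n + 1) * (real n + 2))
             = H n 1 + 1 / (real n + 1) - 2 + 2 / (real n + 2)"
    by (simp add: divide_simps) (simp add: algebra_simps)
  then show ?case
    using Suc by (simp add: H_Suc add_ac)
qed (simp add: H_def)

lemma sum_partial_fractions_H2:
  "(\<Sum>j=1..n. (real j - 1) / ((real j)\<^sup>2 * (real j + 1))) = 2 - 2 / (real n + 1) - H n 2"
proof (induction n)
  case (Suc n)
  have "real n + 1 \<noteq> 0" "real n + 2 \<noteq> 0" by linarith+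
  then have "2 - 2 / (real n + 1) - H n 2 + real n / ((real n + 1)\<^sup>2 * (real n + 2))
             = 2 - 2 / (real n + 2) - (H n 2 + 1 / (real n + 1)\<^sup>2)"
    by (simp add: divide_simps) (simp add: algebra_simps power2_eq_square)
  then show ?case
    using Suc by (simp add: H_Suc add_ac)
qed (simp add: H_def)

lemma sum_mixed_moments_split_prob:
  assumes n: "n \<ge> 2"
  shows "(\<Sum>i=1..n. \<Sum>j=1..n. (if i = j then 2 else 1) / (real i * real j)
                                * ((real n + 1) / (real n - 1) * ((real j - 1) / (real j + 1))))
       = (real n + 1) / (real n - 1) * ((H n 1)\<^sup>2 - H n 2) - 2 * real n / (real n - 1) * (H n 1 - 1)"
proof -
  let ?c = "(real n + 1) / (real n - 1)"
  have column: "(\<Sum>i=1..n. (if i = j then 2 else 1) / (real i * real j)) = H n 1 / real j + 1 / (real j)\<^sup>2"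
    if "j \<in> {1..n}" for j
  proof -
    have "(\<Sum>i=1..n. (if i = j then 2 else 1) / (real i * real j))
          = (\<Sum>i=1..n. 1 / real i / real j + (if i = j then 1 / (real j)\<^sup>2 else 0))"
      by (intro sum.cong refl) (auto simp: power2_eq_square)
    also have "\<dots> = H n 1 / real j + 1 / (real j)\<^sup>2"
      using that by (simp add: sum.distrib H_def sum_divide_distrib)
    finally show ?thesis .
  qed
  have "(\<Sum>i=1..n. \<Sum>j=1..n. (if i = j then 2 else 1) / (real i * real j) * (?c * ((real j - 1) / (real j + 1))))
        = (\<Sum>j=1..n. (\<Sum>i=1..n. (if i = j then 2 else 1) / (real i * real j)) * (?c * ((real j - 1) / (real j + 1))))"
    by (subst sum.swap) (simp only: sum_distrib_right)
  also have "\<dots> = ?c * (\<Sum>j=1..n. H n 1 * ((real j - 1) / (real j * (real j + 1)))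
                                    + (real j - 1) / ((real j)\<^sup>2 * (real j + 1)))"
    unfolding sum_distrib_left
  proof (intro sum.cong refl)
    fix j assume j: "j \<in> {1..n}"
    have "real j \<noteq> 0" "real j + 1 \<noteq> 0" "real n - 1 \<noteq> 0" using j n by auto
    then show "(\<Sum>i=1..n. (if i = j then 2 else 1) / (real i * real j)) * (?c * ((real j - 1) / (real j + 1)))
             = ?c * (H n 1 * ((real j - 1) / (real j * (real j + 1)))
                     + (real j - 1) / ((real j)\<^sup>2 * (real j + 1)))"
      unfolding column[OF j] by (simp add: divide_simps) (simp add: algebra_simps power2_eq_square)
  qed
  also have "\<dots> = ?c * (H n 1 * (H n 1 - 2 + 2 / (real n + 1)) + (2 - 2 / (real n + 1) - H n 2))"
    unfolding sum.distrib sum_distrib_left[symmetric] sum_partial_fractions_H1 sum_partial_fractions_H2 ..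
  also have "\<dots> = (real n + 1) / (real n - 1) * ((H n 1)\<^sup>2 - H n 2) - 2 * real n / (real n - 1) * (H n 1 - 1)"
  proof -
    have "real n + 1 \<noteq> 0" "real n - 1 \<noteq> 0" using n by linarith+
    then show ?thesis by (simp add: divide_simps) (simp add: algebra_simps power2_eq_square)
  qed
  finally show ?thesis .
qed

theorem lemmaY4p2:
  fixes n :: nat
  assumes "n \<ge> 2"
  shows "(\<integral>\<omega>. height n (fst \<omega>) * coal_time n (fst \<omega>) (snd \<omega>) \<partial>yule_space n)
         = (real n + 1) / (real n - 1) * ((H n 1)\<^sup>2 - H n 2)
           - 2 * real n / (real n - 1) * (H n 1 - 1)"
proof -
  have "(\<integral>\<omega>. height n (fst \<omega>) * coal_time n (fst \<omega>) (snd \<omega>) \<partial>yule_space n)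
        = (\<Sum>i=1..n. \<Sum>j=1..n. (if i = j then 2 else 1) / (real i * real j)
                                * measure_pmf.prob (kappa_pmf n) {..<j})"
    unfolding yule_space_def by (rule integral_height_coal_time)
  also have "\<dots> = (\<Sum>i=1..n. \<Sum>j=1..n. (if i = j then 2 else 1) / (real i * real j)
                                * ((real n + 1) / (real n - 1) * ((real j - 1) / (real j + 1))))"
    by (intro sum.cong refl) (simp add: prob_kappa_pmf_lessThan[OF assms])
  also have "\<dots> = (real n + 1) / (real n - 1) * ((H n 1)\<^sup>2 - H n 2)
                  - 2 * real n / (real n - 1) * (H n 1 - 1)"
    by (rule sum_mixed_moments_split_prob[OF assms])
  finally show ?thesis .
qed

end
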